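(* Let $1<p<\infty$. The space $h_p$ is not monotone, and so it is neither normal nor perfect.
   Context: Sequences are complex sequences indexed by positive integers, and $\Delta x_k=x_k-x_{k+1}$. For $1<p<\infty$, $$h_p=\Big\{x:\ \sum_{k=1}^{\infty}(k|\Delta x_k|)^p<\infty,\ \lim_k x_k=0\Big\}.$$ Let $\lambda$ be a sequence space. - $\lambda$ is perfect if $\lambda=\lambda^{\alpha\alpha}$, where $X^\alpha=\{a: (a_kx_k)\in\ell_1\ \forall x\in X\}$. - $\lambda$ is normal if $y\in\lambda$ whenever $|y_k|\le|x_k|$ for all $k$, for some $x\in\lambda$. - $\lambda$ is monotone if it contains the canonical preimages of all its step spaces, i.e. for every $x\in\lambda$ and every set $J$ of indices, the sequence equal to $x_k$ for $k\in J$ and $0$ otherwise belongs to $\lambda$. *)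

theory Defs
  imports "HOL-Analysis.Analysis"
begin

text \<open>Sequences indexed by positive integers are represented as functions
  nat \<Rightarrow> complex, where the value at n represents the (n+1)-th term.
  Hence the weight k in the definition of h_p becomes real (Suc n).\<close>

definition hp :: "real \<Rightarrow> (nat \<Rightarrow> complex) set" where
  "hp p = {x. summable (\<lambda>n. (real (Suc n) * cmod (x n - x (Suc n))) powr p)
              \<and> x \<longlonglongrightarrow> 0}"

definition alpha_dual :: "(nat \<Rightarrow> complex) set \<Rightarrow> (nat \<Rightarrow> complex) set" where
  "alpha_dual X = {a. \<forall>x\<in>X. summable (\<lambda>n. cmod (a n * x n))}"

definition seq_perfect :: "(nat \<Rightarrow> complex) set \<Rightarrow> bool" where
  "seq_perfect L \<longleftrightarrow> L = alpha_dual (alpha_dual L)"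

definition seq_normal :: "(nat \<Rightarrow> complex) set \<Rightarrow> bool" where
  "seq_normal L \<longleftrightarrow> (\<forall>x\<in>L. \<forall>y. (\<forall>n. cmod (y n) \<le> cmod (x n)) \<longrightarrow> y \<in> L)"

definition seq_monotone :: "(nat \<Rightarrow> complex) set \<Rightarrow> bool" where
  "seq_monotone L \<longleftrightarrow> (\<forall>x\<in>L. \<forall>J. (\<lambda>n. if n \<in> J then x n else 0) \<in> L)"

end

theory Submission
  imports Defs
begin

text \<open>The harmonic sequence 1/k lies in h_p, since k |\<Delta>(1/k)| = 1/(k+1). Keeping only its
  terms with odd k, every weighted difference k |\<Delta>x_k| is at least 1/2, so the truncated
  sequence is not in h_p. Normality implies monotonicity, and every \<alpha>-dual is normal, so
  a perfect space is normal.\<close>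

lemma seq_normal_imp_monotone: "seq_normal L \<Longrightarrow> seq_monotone L"
  unfolding seq_normal_def seq_monotone_def by fastforce

lemma seq_normal_alpha_dual: "seq_normal (alpha_dual X)"
  unfolding seq_normal_def alpha_dual_def
proof (intro ballI allI impI CollectI)
  fix a y x
  assume "a \<in> {a. \<forall>x\<in>X. summable (\<lambda>n. cmod (a n * x n))}" and "x \<in> X"
    and le: "\<forall>n. cmod (y n) \<le> cmod (a n)"
  then have "summable (\<lambda>n. cmod (a n * x n))" by blast
  moreover have "norm (cmod (y n * x n)) \<le> cmod (a n * x n)" for n
    using le by (simp add: norm_mult mult_right_mono)
  ultimately show "summable (\<lambda>n. cmod (y n * x n))"
    by (rule summable_comparison_test'[where N = 0])
qed

lemma seq_perfect_imp_normal: "seq_perfect L \<Longrightarrow> seq_normal L"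
  unfolding seq_perfect_def by (metis seq_normal_alpha_dual)

lemma hp_weighted_diff_tendsto_zero:
  assumes "x \<in> hp p" and "0 < p"
  shows "(\<lambda>n. real (Suc n) * cmod (x n - x (Suc n))) \<longlonglongrightarrow> 0"
proof -
  let ?d = "\<lambda>n. real (Suc n) * cmod (x n - x (Suc n))"
  have "(\<lambda>n. ?d n powr p) \<longlonglongrightarrow> 0"
    using assms(1) unfolding hp_def by (blast intro: summable_LIMSEQ_zero)
  then have "(\<lambda>n. (?d n powr p) powr (1 / p)) \<longlonglongrightarrow> 0 powr (1 / p)"
    using assms(2) by (intro tendsto_powr') auto
  moreover have "(?d n powr p) powr (1 / p) = ?d n" for n
    using assms(2) by (simp add: powr_powr)
  ultimately show ?thesis using assms(2) by simp
qed

lemma harmonic_in_hp: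
  assumes "1 < p"
  shows "(\<lambda>n. 1 / of_nat (Suc n) :: complex) \<in> hp p"
proof -
  have diff: "real (Suc n) * cmod (1 / of_nat (Suc n) - 1 / of_nat (Suc (Suc n)))
      = 1 / real (Suc (Suc n))" for n
  proof -
    have "1 / of_nat (Suc n) - 1 / of_nat (Suc (Suc n))
        = (1 / (of_nat (Suc n) * of_nat (Suc (Suc n))) :: complex)"
      by (simp add: field_simps del: of_nat_Suc) simp
    then show ?thesis by (simp add: norm_divide norm_mult del: of_nat_Suc)
  qed
  have "summable (\<lambda>n. real n powr (-p))"
    using assms by (simp add: summable_real_powr_iff)
  then have "summable (\<lambda>n. real (Suc (Suc n)) powr (-p))"
    using summable_iff_shift[of "\<lambda>n. real n powr (-p)" 2] by (simp add: numeral_2_eq_2)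
  moreover have "real (Suc (Suc n)) powr (-p) = (1 / real (Suc (Suc n))) powr p" for n
    by (simp add: powr_minus_divide powr_divide del: of_nat_Suc)
  ultimately have "summable (\<lambda>n. (real (Suc n) * cmod (1 / of_nat (Suc n)
      - 1 / of_nat (Suc (Suc n)) :: complex)) powr p)"
    by (simp only: diff)
  moreover have "(\<lambda>n. 1 / of_nat (Suc n) :: complex) \<longlonglongrightarrow> 0"
    using LIMSEQ_Suc[OF lim_1_over_n[where 'a = complex]] by simp
  ultimately show ?thesis unfolding hp_def by simp
qed

lemma harmonic_even_part_weighted_diff_ge_half:
  defines "y \<equiv> \<lambda>n. if even n then 1 / of_nat (Suc n) else (0 :: complex)"
  shows "1 / 2 \<le> real (Suc n) * cmod (y n - y (Suc n))"
proof (cases "even n")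
  case True
  then show ?thesis by (simp add: y_def norm_divide del: of_nat_Suc)
next
  case False
  then have "real (Suc n) * cmod (y n - y (Suc n)) = real (Suc n) / real (Suc (Suc n))"
    by (simp add: y_def norm_divide del: of_nat_Suc)
  also have "\<dots> \<ge> 1 / 2" by (simp add: field_simps)
  finally show ?thesis .
qed

lemma hp_not_monotone:
  assumes "1 < p"
  shows "\<not> seq_monotone (hp p)"
proof
  assume "seq_monotone (hp p)"
  define y where "y = (\<lambda>n. if even n then 1 / of_nat (Suc n) else (0 :: complex))"
  have "y \<in> hp p"
    using \<open>seq_monotone (hp p)\<close> harmonic_in_hp[OF assms] unfolding seq_monotone_def y_def
    by (auto simp del: of_nat_Suc dest!: bspec spec[where x = "{n. even n}"])
  then have "(\<lambda>n. real (Suc n) * cmod (y n - y (Suc n))) \<longlonglongrightarrow> 0"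
    using assms by (intro hp_weighted_diff_tendsto_zero) auto
  then have "eventually (\<lambda>n. real (Suc n) * cmod (y n - y (Suc n)) < 1 / 2) sequentially"
    by (rule order_tendstoD) simp
  then obtain n where "real (Suc n) * cmod (y n - y (Suc n)) < 1 / 2"
    by (auto simp: eventually_sequentially)
  with harmonic_even_part_weighted_diff_ge_half[of n] show False
    unfolding y_def by linarith
qed

theorem corollary3p11:
  fixes p :: real
  assumes "1 < p"
  shows "\<not> seq_monotone (hp p) \<and> \<not> seq_normal (hp p) \<and> \<not> seq_perfect (hp p)"
  using hp_not_monotone[OF assms] seq_normal_imp_monotone seq_perfect_imp_normal by blast

end
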